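(* Let $\mu\in A_1$, $0<\beta<1$ and $b\in Lip_{\beta,\mu}$. Then for any $1<r<\infty$ there is a constant $C>0$ such that for any locally integrable function $f$, $$M_b(f)(x)\le C\|b\|_{Lip_{\beta,\mu}}\,\mu(x)\,M_{\beta,\mu,r}(f)(x)\quad\text{for a.e. }x\in\mathbb{R}^n.$$
   Context: Cubes have sides parallel to the axes; $f_Q=|Q|^{-1}\int_Q f$; for a weight $\mu$, $\mu(Q)=\int_Q\mu$. $\mu\in A_1$ means there is $C>0$ such that for every cube $Q$, $\frac{1}{|Q|}\int_Q\mu(y)\,dy\le C\mu(x)$ for a.e. $x\in Q$. $Lip_{\beta,\mu}$ is the space of locally integrable $f$ with $\|f\|_{Lip_{\beta,\mu}}=\sup_Q \frac{1}{\mu(Q)^{1+\beta/n}}\int_Q|f(x)-f_Q|\,dx<\infty$. $M_b(f)(x)=\sup_{Q\ni x}\frac{1}{|Q|}\int_Q|b(x)-b(y)||f(y)|\,dy$, and the weighted fractional maximal function is $M_{\beta,\mu,r}(f)(x)=\sup_{Q\ni x}\big(\frac{1}{\mu(Q)^{1-r\beta/n}}\int_Q|f(y)|^r\mu(y)\,dy\big)^{1/r}$, suprema over cubes containing $x$. *)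

theory Defs
  imports "HOL-Analysis.Analysis"
begin

definition cubes :: "'a::euclidean_space set set" where
  "cubes = {cbox a (a + h *\<^sub>R One) | a h. h > 0}"

definition locally_integrable :: "('a::euclidean_space \<Rightarrow> real) \<Rightarrow> bool" where
  "locally_integrable f \<longleftrightarrow> (\<forall>K. compact K \<longrightarrow> set_integrable lebesgue K f)"

definition weight :: "('a::euclidean_space \<Rightarrow> real) \<Rightarrow> bool" where
  "weight \<mu> \<longleftrightarrow> (\<forall>x. 0 \<le> \<mu> x) \<and> locally_integrable \<mu> \<and> (AE x in lebesgue. 0 < \<mu> x)"

definition wmeas :: "('a::euclidean_space \<Rightarrow> real) \<Rightarrow> 'a set \<Rightarrow> real" where
  "wmeas \<mu> Q = (LINT y:Q|lebesgue. \<mu> y)"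

definition cube_avg :: "('a::euclidean_space \<Rightarrow> real) \<Rightarrow> 'a set \<Rightarrow> real" where
  "cube_avg f Q = (LINT y:Q|lebesgue. f y) / measure lebesgue Q"

definition A1 :: "('a::euclidean_space \<Rightarrow> real) \<Rightarrow> bool" where
  "A1 \<mu> \<longleftrightarrow> (\<exists>C>0. \<forall>Q\<in>cubes.
      AE x in lebesgue. x \<in> Q \<longrightarrow> cube_avg \<mu> Q \<le> C * \<mu> x)"

definition lip_norm :: "real \<Rightarrow> ('a::euclidean_space \<Rightarrow> real) \<Rightarrow> ('a \<Rightarrow> real) \<Rightarrow> ennreal" where
  "lip_norm \<beta> \<mu> f = (SUP Q\<in>cubes.
      ennreal (1 / wmeas \<mu> Q powr (1 + \<beta> / real DIM('a))) *
      (\<integral>\<^sup>+ x\<in>Q. ennreal \<bar>f x - cube_avg f Q\<bar> \<partial>lebesgue))"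

definition in_Lip :: "real \<Rightarrow> ('a::euclidean_space \<Rightarrow> real) \<Rightarrow> ('a \<Rightarrow> real) \<Rightarrow> bool" where
  "in_Lip \<beta> \<mu> f \<longleftrightarrow> locally_integrable f \<and> lip_norm \<beta> \<mu> f < \<infinity>"

definition Mb :: "('a::euclidean_space \<Rightarrow> real) \<Rightarrow> ('a \<Rightarrow> real) \<Rightarrow> 'a \<Rightarrow> ennreal" where
  "Mb b f x = (SUP Q\<in>{Q\<in>cubes. x \<in> Q}.
      ennreal (1 / measure lebesgue Q) *
      (\<integral>\<^sup>+ y\<in>Q. ennreal (\<bar>b x - b y\<bar> * \<bar>f y\<bar>) \<partial>lebesgue))"

definition Mfrac :: "real \<Rightarrow> ('a::euclidean_space \<Rightarrow> real) \<Rightarrow> real \<Rightarrow> ('a \<Rightarrow> real) \<Rightarrow> 'a \<Rightarrow> ennreal" where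
  "Mfrac \<beta> \<mu> r f x = (SUP Q\<in>{Q\<in>cubes. x \<in> Q}.
      (let I = (\<integral>\<^sup>+ y\<in>Q. ennreal (\<bar>f y\<bar> powr r * \<mu> y) \<partial>lebesgue) in
       if I = \<infinity> then \<infinity>
       else ennreal ((enn2real I / wmeas \<mu> Q powr (1 - r * \<beta> / real DIM('a))) powr (1 / r))))"

end

theory Submission
  imports Defs
begin

text \<open>At almost every point \<open>x\<close> the \<open>A\<^sub>1\<close> condition holds for all cubes at once:
  \<open>\<mu>(Q) \<le> C \<mu>(x) |Q|\<close> whenever \<open>x \<in> Q\<close>. Consequently a half-size subcube carries at most a fixed
  fraction \<open>\<theta> < 1\<close> of the \<open>\<mu>\<close>-mass of a cube, and along a chain of nested halvings from \<open>Q\<close> down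
  to \<open>x\<close> the averages of \<open>b\<close> move by a geometric series bounded by
  \<open>K \<parallel>b\<parallel> \<mu>(x) \<mu>(Q)\<^sup>\<beta>\<^sup>/\<^sup>n\<close>. A density argument, standing in for Lebesgue differentiation, shows
  that \<open>b(x)\<close> itself stays within this distance of \<open>b\<^sub>Q\<close> for almost every \<open>x\<close>. For two such points
  \<open>x, y \<in> Q\<close>, and since \<open>\<mu>(x), \<mu>(y) \<ge> \<mu>(Q) / (C |Q|)\<close>, this gives
  \<open>|b(x) - b(y)| \<le> 2 C K \<parallel>b\<parallel> \<mu>(x) \<mu>(y) |Q| \<mu>(Q)\<^sup>\<beta>\<^sup>/\<^sup>n\<^sup>-\<^sup>1\<close>. Hoelder's inequality for the
  measure \<open>\<mu> dy\<close> on \<open>Q\<close> then bounds the remaining average of \<open>|f| \<mu>\<close> by the fractional maximal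
  function.\<close>

section \<open>Cubes\<close>

definition cube :: "'a::euclidean_space \<Rightarrow> real \<Rightarrow> 'a set" where
  "cube a h = cbox a (a + h *\<^sub>R One)"

definition centred_cube :: "'a::euclidean_space \<Rightarrow> real \<Rightarrow> 'a set" where
  "centred_cube x s = cube (x - s *\<^sub>R One) (2 * s)"

lemma cubes_iff: "Q \<in> cubes \<longleftrightarrow> (\<exists>a h. 0 < h \<and> Q = cube a h)"
  by (auto simp: cubes_def cube_def)

lemma cubesE:
  assumes "Q \<in> cubes"
  obtains a h where "0 < h" "Q = cube a h"
  using assms by (auto simp: cubes_iff)

lemma cube_in_cubes: "0 < h \<Longrightarrow> cube a h \<in> cubes"
  by (auto simp: cubes_iff)

lemma mem_cube: "x \<in> cube a h \<longleftrightarrow> (\<forall>i\<in>Basis. a \<bullet> i \<le> x \<bullet> i \<and> x \<bullet> i \<le> a \<bullet> i + h)"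
  by (auto simp: cube_def mem_box inner_add_left)

lemma cube_subset_cube:
  assumes "\<And>i. i \<in> Basis \<Longrightarrow> a' \<bullet> i \<le> a \<bullet> i \<and> a \<bullet> i + h \<le> a' \<bullet> i + h'"
  shows "cube a h \<subseteq> cube a' h'"
  using assms unfolding mem_cube subset_iff by force

lemma lmeasurable_cube [simp]: "cube a h \<in> lmeasurable"
  by (simp add: cube_def)

lemma sets_cube [measurable]: "cube a h \<in> sets lebesgue"
  by (simp add: cube_def)

lemma bounded_cube [simp]: "bounded (cube a h)"
  by (simp add: cube_def)

lemma measure_cube:
  fixes a :: "'a::euclidean_space"
  assumes "0 \<le> h"
  shows "measure lebesgue (cube a h) = h ^ DIM('a)"
proof -
  have "measure lebesgue (cube a h) = measure lborel (cbox a (a + h *\<^sub>R One))"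
    by (simp add: cube_def measure_completion)
  also have "\<dots> = (\<Prod>i\<in>(Basis::'a set). h)"
    using assms by (subst content_cbox) (auto simp: inner_add_left)
  finally show ?thesis by simp
qed

lemma sets_cubes: "Q \<in> cubes \<Longrightarrow> Q \<in> sets lebesgue"
  by (auto elim: cubesE)

lemma bounded_cubes: "Q \<in> cubes \<Longrightarrow> bounded Q"
  by (auto elim: cubesE)

lemma lmeasurable_cubes: "Q \<in> cubes \<Longrightarrow> Q \<in> lmeasurable"
  by (auto elim: cubesE)

lemma measure_cubes_pos: "Q \<in> cubes \<Longrightarrow> 0 < measure lebesgue Q"
  by (auto elim!: cubesE simp: measure_cube)

lemma cube_halving:
  assumes "x \<in> cube a h"
  obtains a' where "x \<in> cube a' (h/2)" "cube a' (h/2) \<subseteq> cube a h"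
proof
  define a' where "a' = a + (h/2) *\<^sub>R (\<Sum>i\<in>Basis. (if a \<bullet> i + h/2 \<le> x \<bullet> i then 1 else 0) *\<^sub>R i)"
  have a': "a' \<bullet> i = a \<bullet> i + (if a \<bullet> i + h/2 \<le> x \<bullet> i then h/2 else 0)" if "i \<in> Basis" for i
    using that by (simp add: a'_def inner_add_left inner_sum_left_Basis)
  show "x \<in> cube a' (h/2)"
    using assms unfolding mem_cube by (auto simp: a')
  show "cube a' (h/2) \<subseteq> cube a h"
    by (rule cube_subset_cube) (use assms in \<open>auto simp: a' mem_cube\<close>)
qed

lemma cube_subset_centred_cube: "x \<in> cube a s \<Longrightarrow> cube a s \<subseteq> centred_cube x s"
  unfolding centred_cube_def
  by (rule cube_subset_cube) (auto simp: mem_cube inner_diff_left)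

lemma ball_subset_centred_cube: "ball x s \<subseteq> centred_cube x s"
proof
  fix y assume "y \<in> ball x s"
  then have "\<bar>(y - x) \<bullet> i\<bar> < s" if "i \<in> Basis" for i
    using Basis_le_norm[OF that, of "y - x"] by (simp add: dist_norm norm_minus_commute)
  then show "y \<in> centred_cube x s"
    by (fastforce simp: centred_cube_def mem_cube inner_diff_left abs_less_iff)
qed

lemma centred_cube_in_cubes: "0 < s \<Longrightarrow> centred_cube x s \<in> cubes"
  by (simp add: centred_cube_def cube_in_cubes)

lemma centre_in_centred_cube: "0 < s \<Longrightarrow> x \<in> centred_cube x s"
  using ball_subset_centred_cube[of x s] by auto

lemma measure_centred_cube:
  fixes x :: "'a::euclidean_space"
  assumes "0 \<le> s"
  shows "measure lebesgue (centred_cube x s) = 2 ^ DIM('a) * s ^ DIM('a)"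
  using assms by (simp add: centred_cube_def measure_cube power_mult_distrib)

lemma countable_cubes_cover:
  "\<exists>F :: 'a::euclidean_space set set. countable F \<and> F \<subseteq> cubes \<and>
    (\<forall>Q\<in>cubes. \<exists>Q'\<in>F. Q \<subseteq> Q' \<and> measure lebesgue Q' \<le> 2 ^ DIM('a) * measure lebesgue Q)"
proof -
  obtain D :: "'a set" where D: "countable D" "\<And>U. open U \<Longrightarrow> U \<noteq> {} \<Longrightarrow> \<exists>y\<in>D. y \<in> U"
    using countable_dense_exists by blast
  define F where "F = (\<lambda>(d, h). cube d h) ` (D \<times> (\<rat> \<inter> {0<..}))"
  have "countable F"
    unfolding F_def using D(1) countable_rat by blast
  moreover have "F \<subseteq> cubes"
    unfolding F_def by (force simp: cubes_iff)
  moreover have "\<exists>Q'\<in>F. Q \<subseteq> Q' \<and> measure lebesgue Q' \<le> 2 ^ DIM('a) * measure lebesgue Q"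
    if "Q \<in> cubes" for Q
  proof -
    from that obtain a h where h: "0 < h" and Q: "Q = cube a h" by (rule cubesE)
    obtain d where d: "d \<in> D" "d \<in> box (a - (h/2) *\<^sub>R One) a"
      using D(2)[of "box (a - (h/2) *\<^sub>R One) a"] h by (auto simp: box_ne_empty inner_diff_left)
    obtain h' where h': "h' \<in> \<rat>" "3*h/2 < h'" "h' < 2*h"
      using Rats_dense_in_real[of "3*h/2" "2*h"] h by auto
    have "Q \<subseteq> cube d h'"
      unfolding Q by (rule cube_subset_cube) (use d h' in \<open>auto simp: mem_box inner_diff_left\<close>)
    moreover have "measure lebesgue (cube d h') \<le> 2 ^ DIM('a) * measure lebesgue Q"
    proof -
      have "h' ^ DIM('a) \<le> (2 * h) ^ DIM('a)"
        using h h' by (intro power_mono) auto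
      then show ?thesis
        using h h' by (simp add: Q measure_cube power_mult_distrib)
    qed
    moreover have "cube d h' \<in> F"
      unfolding F_def using d h' h by auto
    ultimately show ?thesis
      by blast
  qed
  ultimately show ?thesis
    by blast
qed

section \<open>Local integrability and weights\<close>

lemma locally_integrable_measurable:
  assumes "locally_integrable f"
  shows "f \<in> borel_measurable lebesgue"
proof -
  have m: "(\<lambda>x. indicator (cball 0 (real k)) x *\<^sub>R f x) \<in> borel_measurable lebesgue" for k :: nat
    using assms unfolding locally_integrable_def set_integrable_def
    by (meson borel_measurable_integrable compact_cball)
  have "(\<lambda>k. indicator (cball 0 (real k)) x *\<^sub>R f x) \<longlonglongrightarrow> f x" for x :: 'a
  proof (rule tendsto_eventually)
    obtain k :: nat where "norm x \<le> real k" using real_arch_simple by blast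
    then show "\<forall>\<^sub>F k in sequentially. indicator (cball 0 (real k)) x *\<^sub>R f x = f x"
      unfolding eventually_sequentially
      by (intro exI[of _ k]) (auto simp: indicator_def dist_norm)
  qed
  then show ?thesis
    by (rule borel_measurable_LIMSEQ_real[OF _ m])
qed

lemma locally_integrable_set_integrable:
  assumes "locally_integrable f" "bounded S" "S \<in> sets lebesgue"
  shows "set_integrable lebesgue S f"
proof -
  have "set_integrable lebesgue (closure S) f"
    using assms unfolding locally_integrable_def by (simp add: compact_closure)
  then show ?thesis
    by (rule set_integrable_subset) (use assms closure_subset in auto)
qed

lemma locally_integrable_const: "locally_integrable (\<lambda>_. c)"
  unfolding locally_integrable_def set_integrable_def
proof (intro allI impI)
  fix K :: "'a::euclidean_space set" assume "compact K"
  then have "K \<in> lmeasurable" by (rule lmeasurable_compact)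
  then show "integrable lebesgue (\<lambda>x. indicat_real K x *\<^sub>R c)"
    by (intro integrable_indicator) (auto simp: fmeasurable_def)
qed

lemma set_integrable_abs_diff_const:
  assumes "locally_integrable f" "bounded S" "S \<in> sets lebesgue"
  shows "set_integrable lebesgue S (\<lambda>y. \<bar>f y - c\<bar>)"
  using assms
  by (intro set_integrable_abs set_integral_diff locally_integrable_set_integrable locally_integrable_const)

lemma set_integrable_nn_set_integral_eq:
  assumes "set_integrable M A f" "A \<in> sets M" "AE x in M. x \<in> A \<longrightarrow> 0 \<le> f x"
  shows "(\<integral>\<^sup>+x\<in>A. ennreal (f x) \<partial>M) = ennreal (LINT x:A|M. f x)"
proof -
  have "AE x in M. 0 \<le> f x * indicator A x"
    using assms(3) by eventually_elim (auto simp: indicator_def)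
  then show ?thesis
    unfolding set_lebesgue_integral_def nn_integral_set_ennreal using assms
    by (subst nn_integral_eq_integral) (simp_all add: mult_ac set_integrable_def)
qed

lemma set_integral_mono_set_nonneg:
  fixes f :: "_ \<Rightarrow> real"
  assumes "set_integrable M B f" "A \<subseteq> B" "A \<in> sets M" "\<And>x. x \<in> B \<Longrightarrow> 0 \<le> f x"
  shows "(LINT x:A|M. f x) \<le> (LINT x:B|M. f x)"
proof -
  have "set_integrable M A f"
    using assms(1,3,2) by (rule set_integrable_subset)
  with assms show ?thesis
    unfolding set_lebesgue_integral_def set_integrable_def
    by (intro integral_mono) (auto simp: indicator_def)
qed

lemma wmeas_nonneg: "(\<And>x. 0 \<le> \<mu> x) \<Longrightarrow> 0 \<le> wmeas \<mu> S"
  unfolding wmeas_def set_lebesgue_integral_def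
  by (rule Bochner_Integration.integral_nonneg) (simp add: indicator_def)

lemma wmeas_mono:
  assumes "weight \<mu>" "S \<subseteq> T" "bounded T" "S \<in> sets lebesgue" "T \<in> sets lebesgue"
  shows "wmeas \<mu> S \<le> wmeas \<mu> T"
  using assms bounded_subset[OF assms(3,2)] unfolding weight_def wmeas_def
  by (intro set_integral_mono_set_nonneg locally_integrable_set_integrable) auto

lemma wmeas_Diff:
  assumes "weight \<mu>" "S \<subseteq> T" "bounded T" "S \<in> sets lebesgue" "T \<in> sets lebesgue"
  shows "wmeas \<mu> T = wmeas \<mu> S + wmeas \<mu> (T - S)"
proof -
  have "set_integrable lebesgue T \<mu>"
    using assms unfolding weight_def by (intro locally_integrable_set_integrable) auto
  then have "set_integrable lebesgue S \<mu>" "set_integrable lebesgue (T - S) \<mu>"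
    using assms by (auto intro: set_integrable_subset)
  moreover have "T = S \<union> (T - S)"
    using assms(2) by blast
  ultimately show ?thesis
    unfolding wmeas_def by (metis Diff_disjoint set_integral_Un)
qed

lemma nn_set_integral_eq_wmeas:
  assumes "weight \<mu>" "bounded S" "S \<in> sets lebesgue"
  shows "(\<integral>\<^sup>+x\<in>S. ennreal (\<mu> x) \<partial>lebesgue) = ennreal (wmeas \<mu> S)"
  using assms unfolding weight_def wmeas_def
  by (intro set_integrable_nn_set_integral_eq locally_integrable_set_integrable) auto

lemma wmeas_pos:
  assumes \<mu>: "weight \<mu>" and S: "bounded S" "S \<in> sets lebesgue" "0 < measure lebesgue S"
  shows "0 < wmeas \<mu> S"
proof (rule ccontr)
  assume "\<not> 0 < wmeas \<mu> S"
  with wmeas_nonneg[of \<mu> S] \<mu> have "(\<integral>\<^sup>+x\<in>S. ennreal (\<mu> x) \<partial>lebesgue) = 0"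
    by (simp add: nn_set_integral_eq_wmeas[OF \<mu> S(1,2)] weight_def)
  moreover have [measurable]: "\<mu> \<in> borel_measurable lebesgue" "S \<in> sets lebesgue"
    using \<mu> S(2) by (auto simp: weight_def intro: locally_integrable_measurable)
  ultimately have "AE x in lebesgue. ennreal (\<mu> x) * indicator S x = 0"
    by (subst (asm) nn_integral_0_iff_AE) auto
  then have "AE x in lebesgue. x \<notin> S"
    using \<mu> unfolding weight_def by (auto elim: AE_mp simp: indicator_def)
  then have "S \<in> null_sets lebesgue"
    using S(2) by (simp add: AE_iff_null_sets)
  with S(3) show False
    by (simp add: measure_eq_0_null_sets)
qed

lemma wmeas_cubes_pos: "weight \<mu> \<Longrightarrow> Q \<in> cubes \<Longrightarrow> 0 < wmeas \<mu> Q"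
  by (intro wmeas_pos bounded_cubes sets_cubes measure_cubes_pos)

lemma A1_imp_wmeas_bound:
  assumes "A1 \<mu>"
  obtains C0 where "0 < C0"
    "\<And>Q. Q \<in> cubes \<Longrightarrow> AE x in lebesgue. x \<in> Q \<longrightarrow> wmeas \<mu> Q \<le> C0 * \<mu> x * measure lebesgue Q"
proof -
  obtain C0 where C0: "0 < C0"
    and avg: "\<And>Q. Q \<in> cubes \<Longrightarrow> AE x in lebesgue. x \<in> Q \<longrightarrow> cube_avg \<mu> Q \<le> C0 * \<mu> x"
    using assms unfolding A1_def by blast
  have "AE x in lebesgue. x \<in> Q \<longrightarrow> wmeas \<mu> Q \<le> C0 * \<mu> x * measure lebesgue Q" if "Q \<in> cubes" for Q
    using avg[OF that]
    by eventually_elim (use measure_cubes_pos[OF that] in \<open>simp add: cube_avg_def wmeas_def pos_divide_le_eq\<close>)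
  with C0 show thesis
    using that by blast
qed

lemma A1_imp_AE_uniform_bound:
  fixes \<mu> :: "'a::euclidean_space \<Rightarrow> real"
  assumes \<mu>: "weight \<mu>" and "A1 \<mu>"
  obtains C where "1 \<le> C"
    "AE x in lebesgue. 0 < \<mu> x \<and> (\<forall>Q\<in>cubes. x \<in> Q \<longrightarrow> wmeas \<mu> Q \<le> C * \<mu> x * measure lebesgue Q)"
proof -
  obtain C0 where C0: "0 < C0"
    and bound: "\<And>Q. Q \<in> cubes \<Longrightarrow> AE x in lebesgue. x \<in> Q \<longrightarrow> wmeas \<mu> Q \<le> C0 * \<mu> x * measure lebesgue Q"
    using \<open>A1 \<mu>\<close> by (rule A1_imp_wmeas_bound) blast
  obtain F :: "'a set set" where F: "countable F" "F \<subseteq> cubes"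
    and cover: "\<forall>Q\<in>cubes. \<exists>Q'\<in>F. Q \<subseteq> Q' \<and> measure lebesgue Q' \<le> 2 ^ DIM('a) * measure lebesgue Q"
    using countable_cubes_cover by (elim exE conjE)
  define C where "C = max 1 (2 ^ DIM('a) * C0)"
  have "AE x in lebesgue. \<forall>Q'\<in>F. x \<in> Q' \<longrightarrow> wmeas \<mu> Q' \<le> C0 * \<mu> x * measure lebesgue Q'"
    using F bound by (intro AE_ball_countable') auto
  moreover have "AE x in lebesgue. 0 < \<mu> x"
    using \<mu> by (simp add: weight_def)
  ultimately have "AE x in lebesgue. 0 < \<mu> x \<and>
      (\<forall>Q\<in>cubes. x \<in> Q \<longrightarrow> wmeas \<mu> Q \<le> C * \<mu> x * measure lebesgue Q)"
  proof eventually_elim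
    case (elim x)
    have "wmeas \<mu> Q \<le> C * \<mu> x * measure lebesgue Q" if Q: "Q \<in> cubes" "x \<in> Q" for Q
    proof -
      obtain Q' where Q': "Q' \<in> F" "Q \<subseteq> Q'" "measure lebesgue Q' \<le> 2 ^ DIM('a) * measure lebesgue Q"
        using cover Q(1) by blast
      have "wmeas \<mu> Q \<le> wmeas \<mu> Q'"
        using Q Q' F(2) by (intro wmeas_mono[OF \<mu>] bounded_cubes sets_cubes) auto
      also have "\<dots> \<le> C0 * \<mu> x * measure lebesgue Q'"
        using elim(1) Q(2) Q'(1,2) by blast
      also have "\<dots> \<le> C0 * \<mu> x * (2 ^ DIM('a) * measure lebesgue Q)"
        using Q'(3) C0 elim by (intro mult_left_mono) auto
      also have "\<dots> = (2 ^ DIM('a) * C0) * \<mu> x * measure lebesgue Q"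
        by (simp only: ac_simps)
      also have "\<dots> \<le> C * \<mu> x * measure lebesgue Q"
        using elim measure_cubes_pos[OF Q(1)] unfolding C_def by (intro mult_right_mono) auto
      finally show ?thesis .
    qed
    with elim show ?case
      by blast
  qed
  moreover have "1 \<le> C"
    by (simp add: C_def)
  ultimately show thesis
    using that by blast
qed

lemma set_integral_const_lmeasurable:
  "S \<in> lmeasurable \<Longrightarrow> (LINT y:S|lebesgue. c) = measure lebesgue S * c"
  using set_integral_const[of S lebesgue c] by (auto simp: fmeasurable_def)

lemma cube_avg_diff_le:
  assumes b: "locally_integrable b" and R: "R \<in> cubes" and R': "R' \<in> cubes" "R' \<subseteq> R"
  shows "\<bar>cube_avg b R' - cube_avg b R\<bar> \<le> (LINT y:R|lebesgue. \<bar>b y - cube_avg b R\<bar>) / measure lebesgue R'"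
proof -
  let ?c = "cube_avg b R" and ?m = "measure lebesgue R'"
  have m: "0 < ?m"
    using R'(1) by (rule measure_cubes_pos)
  have "bounded R'" "R' \<in> sets lebesgue"
    using R'(1) by (auto intro: bounded_cubes sets_cubes)
  then have ib: "set_integrable lebesgue R' b" and ic: "set_integrable lebesgue R' (\<lambda>_. ?c)"
    using b by (auto intro: locally_integrable_set_integrable locally_integrable_const)
  have "(LINT y:R'|lebesgue. b y - ?c) = (LINT y:R'|lebesgue. b y) - ?m * ?c"
    using set_integral_diff(2)[OF ib ic] set_integral_const_lmeasurable[OF lmeasurable_cubes[OF R'(1)]]
    by simp
  then have eq: "cube_avg b R' - ?c = (LINT y:R'|lebesgue. b y - ?c) / ?m"
    using m by (simp add: cube_avg_def field_simps)
  have "\<bar>LINT y:R'|lebesgue. b y - ?c\<bar> \<le> (LINT y:R'|lebesgue. \<bar>b y - ?c\<bar>)"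
    using set_integral_norm_bound[OF set_integral_diff(1)[OF ib ic]] by simp
  also have "\<dots> \<le> (LINT y:R|lebesgue. \<bar>b y - ?c\<bar>)"
    using b R R' \<open>R' \<in> sets lebesgue\<close>
    by (intro set_integral_mono_set_nonneg set_integrable_abs_diff_const bounded_cubes sets_cubes) auto
  finally show ?thesis
    unfolding eq using m by (simp add: divide_right_mono)
qed

section \<open>Hoelder's inequality and fractional averages\<close>

lemma Youngs_inequality_scaled:
  fixes t a r :: real
  assumes t: "0 \<le> t" and a: "0 < a" and r: "1 < r"
  shows "t \<le> a powr (1 - r) * t powr r / r + a * (1 - 1 / r)"
proof -
  have "t / a * 1 \<le> (t / a) powr r / r + 1 powr (r / (r - 1)) / (r / (r - 1))"
    using t a r by (intro Youngs_inequality) (auto simp: field_simps)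
  then have "t / a \<le> (t / a) powr r / r + (1 - 1 / r)"
    using r by (simp add: field_simps)
  then have "a * (t / a) \<le> a * ((t / a) powr r / r + (1 - 1 / r))"
    using a by (intro mult_left_mono) auto
  moreover have "a * (t / a) powr r = a powr (1 - r) * t powr r"
    using a t by (simp add: powr_divide powr_diff)
  ultimately show ?thesis
    using a by (simp add: distrib_left)
qed

lemma nn_set_integral_eq_0_if_powr:
  fixes f w :: "'a \<Rightarrow> real"
  assumes [measurable]: "f \<in> borel_measurable M" "w \<in> borel_measurable M" "Q \<in> sets M"
    and w: "\<And>x. 0 \<le> w x" and r: "0 < r"
    and I: "(\<integral>\<^sup>+x\<in>Q. ennreal (\<bar>f x\<bar> powr r * w x) \<partial>M) = 0"
  shows "(\<integral>\<^sup>+x\<in>Q. ennreal (\<bar>f x\<bar> * w x) \<partial>M) = 0"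
proof -
  have "AE x in M. ennreal (\<bar>f x\<bar> powr r * w x) * indicator Q x = 0"
    using I by (subst (asm) nn_integral_0_iff_AE) auto
  then have "AE x in M. ennreal (\<bar>f x\<bar> * w x) * indicator Q x = 0"
  proof eventually_elim
    case (elim x)
    have "\<bar>f x\<bar> * w x = 0" if "x \<in> Q"
    proof -
      have "\<bar>f x\<bar> powr r * w x \<le> 0"
        using elim that by (simp add: ennreal_eq_0_iff)
      then have "\<bar>f x\<bar> powr r * w x = 0"
        using w[of x] by (intro antisym) auto
      then show ?thesis
        by auto
    qed
    then show ?case
      by (auto simp: indicator_def)
  qed
  then show ?thesis
    by (subst nn_integral_0_iff_AE) auto
qed

lemma nn_set_integral_Young:
  fixes f w :: "'a \<Rightarrow> real"
  assumes [measurable]: "f \<in> borel_measurable M" "w \<in> borel_measurable M" "Q \<in> sets M"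
    and w: "\<And>x. 0 \<le> w x" and a: "0 < a" and r: "1 < r"
    and W: "(\<integral>\<^sup>+x\<in>Q. ennreal (w x) \<partial>M) = ennreal W" "0 \<le> W"
    and I: "(\<integral>\<^sup>+x\<in>Q. ennreal (\<bar>f x\<bar> powr r * w x) \<partial>M) = ennreal I" "0 \<le> I"
  shows "(\<integral>\<^sup>+x\<in>Q. ennreal (\<bar>f x\<bar> * w x) \<partial>M) \<le> ennreal (a powr (1 - r) / r * I + a * (1 - 1 / r) * W)"
proof -
  define c1 where "c1 = a powr (1 - r) / r"
  define c2 where "c2 = a * (1 - 1 / r)"
  have c: "0 \<le> c1" "0 \<le> c2"
    using a r by (auto simp: c1_def c2_def)
  have "(\<integral>\<^sup>+x\<in>Q. ennreal (\<bar>f x\<bar> * w x) \<partial>M)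
      \<le> (\<integral>\<^sup>+x\<in>Q. ennreal c1 * ennreal (\<bar>f x\<bar> powr r * w x) + ennreal c2 * ennreal (w x) \<partial>M)"
  proof (intro nn_integral_mono mult_right_mono)
    fix x
    have "\<bar>f x\<bar> * w x \<le> (c1 * \<bar>f x\<bar> powr r + c2) * w x"
      using Youngs_inequality_scaled[OF _ a r, of "\<bar>f x\<bar>"] w[of x]
      by (intro mult_right_mono) (auto simp: c1_def c2_def)
    then show "ennreal (\<bar>f x\<bar> * w x) \<le> ennreal c1 * ennreal (\<bar>f x\<bar> powr r * w x) + ennreal c2 * ennreal (w x)"
      using c w[of x] by (simp add: ennreal_plus[symmetric] ennreal_mult[symmetric] algebra_simps del: ennreal_plus)
  qed simp
  also have "\<dots> = (\<integral>\<^sup>+x\<in>Q. ennreal c1 * ennreal (\<bar>f x\<bar> powr r * w x) \<partial>M)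
      + (\<integral>\<^sup>+x\<in>Q. ennreal c2 * ennreal (w x) \<partial>M)"
    by (rule nn_set_integral_add) auto
  also have "\<dots> = ennreal c1 * ennreal I + ennreal c2 * ennreal W"
    unfolding I(1)[symmetric] W(1)[symmetric]
    by (subst (1 2) nn_integral_cmult[symmetric]) (auto simp: mult_ac)
  also have "\<dots> = ennreal (c1 * I + c2 * W)"
    using c I(2) W(2) by (simp add: ennreal_plus ennreal_mult)
  finally show ?thesis
    by (simp add: c1_def c2_def)
qed

text \<open>Young's inequality, with the scale \<open>a\<close> chosen to balance its two terms.\<close>

lemma nn_set_integral_weighted_Holder:
  fixes f w :: "'a \<Rightarrow> real"
  assumes [measurable]: "f \<in> borel_measurable M" "w \<in> borel_measurable M" "Q \<in> sets M"
    and w: "\<And>x. 0 \<le> w x" and r: "1 < r"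
    and W: "(\<integral>\<^sup>+x\<in>Q. ennreal (w x) \<partial>M) = ennreal W" "0 < W"
    and I: "(\<integral>\<^sup>+x\<in>Q. ennreal (\<bar>f x\<bar> powr r * w x) \<partial>M) = ennreal I" "0 \<le> I"
  shows "(\<integral>\<^sup>+x\<in>Q. ennreal (\<bar>f x\<bar> * w x) \<partial>M) \<le> ennreal ((I / W) powr (1 / r) * W)"
proof (cases "I = 0")
  case True
  then show ?thesis
    using nn_set_integral_eq_0_if_powr[of f M w Q r] I(1) w r by simp
next
  case False
  define a where "a = (I / W) powr (1 / r)"
  have "I / W \<noteq> 0"
    using False W(2) by simp
  then have a: "0 < a"
    unfolding a_def using powr_gt_zero by blast
  have "a powr r = I / W"
    using r I(2) W(2) by (simp add: a_def powr_powr)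
  then have "a powr (1 - r) * I = a * W"
    using a W(2) by (simp add: powr_diff field_simps)
  then have "a powr (1 - r) / r * I + a * (1 - 1 / r) * W = a * W"
    using r by (simp add: field_simps)
  then show ?thesis
    using nn_set_integral_Young[OF assms(1-4) a r W(1) _ I] W(2) by (simp add: a_def)
qed

lemma divide_powr_one_minus:
  fixes I w r \<beta> n :: real
  assumes "0 < w" "0 < r"
  shows "(I / w powr (1 - r * \<beta> / n)) powr (1 / r) = (I / w) powr (1 / r) * w powr (\<beta> / n)"
proof -
  have "(I / w powr (1 - r * \<beta> / n)) powr (1 / r) = (I / w * w powr (r * \<beta> / n)) powr (1 / r)"
    using assms by (simp add: powr_diff)
  also have "\<dots> = (I / w) powr (1 / r) * (w powr (r * \<beta> / n)) powr (1 / r)"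
    by (rule powr_mult)
  also have "(w powr (r * \<beta> / n)) powr (1 / r) = w powr (\<beta> / n)"
    using assms by (simp add: powr_powr)
  finally show ?thesis .
qed

definition frac_cube_avg :: "real \<Rightarrow> ('a::euclidean_space \<Rightarrow> real) \<Rightarrow> real \<Rightarrow> ('a \<Rightarrow> real) \<Rightarrow> 'a set \<Rightarrow> ennreal" where
  "frac_cube_avg \<beta> \<mu> r f Q = (let I = (\<integral>\<^sup>+ y\<in>Q. ennreal (\<bar>f y\<bar> powr r * \<mu> y) \<partial>lebesgue) in
     if I = \<infinity> then \<infinity>
     else ennreal ((enn2real I / wmeas \<mu> Q powr (1 - r * \<beta> / real DIM('a))) powr (1 / r)))"

lemma frac_cube_avg_le_Mfrac: "Q \<in> cubes \<Longrightarrow> x \<in> Q \<Longrightarrow> frac_cube_avg \<beta> \<mu> r f Q \<le> Mfrac \<beta> \<mu> r f x"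
  unfolding Mfrac_def frac_cube_avg_def by (rule SUP_upper) simp

lemma weighted_avg_le_frac_cube_avg:
  fixes \<mu> :: "'a::euclidean_space \<Rightarrow> real"
  assumes \<mu>: "weight \<mu>" and Q: "Q \<in> cubes" and f: "f \<in> borel_measurable lebesgue" and r: "1 < r"
  shows "ennreal (wmeas \<mu> Q powr (\<beta> / DIM('a)) / wmeas \<mu> Q) * (\<integral>\<^sup>+y\<in>Q. ennreal (\<bar>f y\<bar> * \<mu> y) \<partial>lebesgue)
    \<le> frac_cube_avg \<beta> \<mu> r f Q"
proof (cases "(\<integral>\<^sup>+ y\<in>Q. ennreal (\<bar>f y\<bar> powr r * \<mu> y) \<partial>lebesgue) = \<infinity>")
  case True
  then show ?thesis
    by (simp add: frac_cube_avg_def)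
next
  case False
  let ?w = "wmeas \<mu> Q" and ?p = "\<beta> / DIM('a)"
  define I where "I = enn2real (\<integral>\<^sup>+ y\<in>Q. ennreal (\<bar>f y\<bar> powr r * \<mu> y) \<partial>lebesgue)"
  have w: "0 < ?w"
    using \<mu> Q by (rule wmeas_cubes_pos)
  have I: "(\<integral>\<^sup>+ y\<in>Q. ennreal (\<bar>f y\<bar> powr r * \<mu> y) \<partial>lebesgue) = ennreal I" "0 \<le> I"
    using False by (simp_all add: I_def ennreal_enn2real_if less_top)
  have "(\<integral>\<^sup>+y\<in>Q. ennreal (\<bar>f y\<bar> * \<mu> y) \<partial>lebesgue) \<le> ennreal ((I / ?w) powr (1 / r) * ?w)"
    using \<mu> Q f r w I
    by (intro nn_set_integral_weighted_Holder nn_set_integral_eq_wmeas bounded_cubes sets_cubes)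
      (auto simp: weight_def intro: locally_integrable_measurable)
  then have "ennreal (?w powr ?p / ?w) * (\<integral>\<^sup>+y\<in>Q. ennreal (\<bar>f y\<bar> * \<mu> y) \<partial>lebesgue)
      \<le> ennreal (?w powr ?p / ?w) * ennreal ((I / ?w) powr (1 / r) * ?w)"
    by (rule mult_left_mono) simp
  also have "\<dots> = ennreal ((I / ?w) powr (1 / r) * ?w powr ?p)"
    using w by (simp add: ennreal_mult[symmetric])
  also have "(I / ?w) powr (1 / r) * ?w powr ?p = (I / ?w powr (1 - r * \<beta> / DIM('a))) powr (1 / r)"
    using w r by (simp add: divide_powr_one_minus)
  finally show ?thesis
    using False by (simp add: frac_cube_avg_def I_def)
qed

section \<open>Mass decay along nested cubes\<close>

locale A1_weight =
  fixes \<mu> :: "'a::euclidean_space \<Rightarrow> real" and C :: real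
  assumes weight: "weight \<mu>" and one_le_C: "1 \<le> C"
    and AE_bound: "AE x in lebesgue. 0 < \<mu> x \<and>
      (\<forall>Q\<in>cubes. x \<in> Q \<longrightarrow> wmeas \<mu> Q \<le> C * \<mu> x * measure lebesgue Q)"
begin

definition A1_point :: "'a \<Rightarrow> bool" where
  "A1_point x \<longleftrightarrow> 0 < \<mu> x \<and> (\<forall>Q\<in>cubes. x \<in> Q \<longrightarrow> wmeas \<mu> Q \<le> C * \<mu> x * measure lebesgue Q)"

lemma AE_A1_point: "AE x in lebesgue. A1_point x"
  using AE_bound unfolding A1_point_def .

lemma A1_point_pos: "A1_point x \<Longrightarrow> 0 < \<mu> x"
  by (simp add: A1_point_def)

lemma A1_pointD: "A1_point x \<Longrightarrow> Q \<in> cubes \<Longrightarrow> x \<in> Q \<Longrightarrow> wmeas \<mu> Q \<le> C * \<mu> x * measure lebesgue Q"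
  by (simp add: A1_point_def)

lemma mu_nonneg: "0 \<le> \<mu> x"
  using weight by (simp add: weight_def)

lemma wmeas_mu_nonneg: "0 \<le> wmeas \<mu> S"
  using mu_nonneg by (rule wmeas_nonneg)

lemma measurable_mu [measurable]: "\<mu> \<in> borel_measurable lebesgue"
  using weight by (simp add: weight_def locally_integrable_measurable)

lemma wmeas_subset_ge:
  assumes Q: "Q \<in> cubes" and S: "S \<subseteq> Q" "S \<in> sets lebesgue"
  shows "measure lebesgue S * (wmeas \<mu> Q / (C * measure lebesgue Q)) \<le> wmeas \<mu> S"
proof -
  have S_lm: "S \<in> lmeasurable"
    using S lmeasurable_cubes[OF Q] by (auto intro: fmeasurableI2)
  have "AE y in lebesgue. y \<in> S \<longrightarrow> wmeas \<mu> Q / (C * measure lebesgue Q) \<le> \<mu> y"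
    using AE_A1_point
  proof eventually_elim
    case (elim y)
    then show ?case
      using A1_pointD[OF elim Q] S one_le_C measure_cubes_pos[OF Q]
      by (auto simp: pos_divide_le_eq mult_ac)
  qed
  then have "(LINT y:S|lebesgue. wmeas \<mu> Q / (C * measure lebesgue Q)) \<le> wmeas \<mu> S"
    unfolding wmeas_def using weight S bounded_subset[OF bounded_cubes[OF Q] S(1)]
    by (intro set_integral_mono_AE locally_integrable_set_integrable locally_integrable_const)
      (auto simp: weight_def)
  then show ?thesis
    by (simp add: set_integral_const_lmeasurable[OF S_lm])
qed

definition decay_ratio :: real where
  "decay_ratio = 1 - (1 - 1 / 2 ^ DIM('a)) / C"

lemma decay_ratio_pos: "0 < decay_ratio" and decay_ratio_less_1: "decay_ratio < 1"
proof -
  define e :: real where "e = 1 - 1 / 2 ^ DIM('a)"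
  have e: "0 < e" "e < 1"
    by (auto simp: e_def)
  have "e / C \<le> e / 1"
    using one_le_C e by (intro divide_left_mono) auto
  moreover have "0 < e / C"
    using one_le_C e by simp
  ultimately show "0 < decay_ratio" "decay_ratio < 1"
    using e unfolding decay_ratio_def e_def[symmetric] by linarith+
qed

text \<open>Outside a half-size subcube \<open>R'\<close> of \<open>R\<close>, the \<open>A\<^sub>1\<close> bound gives \<open>\<mu> \<ge> \<mu>(R) / (C |R|)\<close> almost
  everywhere, on a set of measure \<open>(1 - 2\<^sup>-\<^sup>n) |R|\<close>.\<close>

lemma wmeas_half_cube_le:
  assumes h: "0 < h" and sub: "cube a' (h/2) \<subseteq> cube a h"
  shows "wmeas \<mu> (cube a' (h/2)) \<le> decay_ratio * wmeas \<mu> (cube a h)"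
proof -
  define e :: real where "e = 1 - 1 / 2 ^ DIM('a)"
  let ?R = "cube a h" and ?R' = "cube a' (h/2)"
  have R: "?R \<in> cubes"
    using h by (rule cube_in_cubes)
  have m: "0 < measure lebesgue ?R"
    using R by (rule measure_cubes_pos)
  have "measure lebesgue (?R - ?R') = measure lebesgue ?R - measure lebesgue ?R'"
    using sub by (intro measurable_measure_Diff) auto
  also have "\<dots> = e * measure lebesgue ?R"
    using h by (simp add: e_def measure_cube power_divide field_simps)
  finally have "e * measure lebesgue ?R * (wmeas \<mu> ?R / (C * measure lebesgue ?R)) \<le> wmeas \<mu> (?R - ?R')"
    using wmeas_subset_ge[OF R, of "?R - ?R'"] by simp
  moreover have "e * measure lebesgue ?R * (wmeas \<mu> ?R / (C * measure lebesgue ?R)) = e / C * wmeas \<mu> ?R"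
    using m by simp
  moreover have "wmeas \<mu> ?R = wmeas \<mu> ?R' + wmeas \<mu> (?R - ?R')"
    using sub by (intro wmeas_Diff weight) auto
  ultimately show ?thesis
    unfolding decay_ratio_def e_def[symmetric] by (simp add: algebra_simps)
qed

lemma wmeas_centred_cube_le:
  assumes "A1_point x" "0 < s"
  shows "wmeas \<mu> (centred_cube x s) \<le> 2 ^ DIM('a) * C * \<mu> x * s ^ DIM('a)"
  using A1_pointD[OF assms(1) centred_cube_in_cubes[OF assms(2)] centre_in_centred_cube[OF assms(2)]] assms(2)
  by (simp add: measure_centred_cube mult_ac)

lemma wmeas_centred_cube_powr_le:
  assumes x: "A1_point x" and s: "0 < s" and "0 \<le> \<beta>"
  shows "wmeas \<mu> (centred_cube x s) powr (\<beta> / DIM('a))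
    \<le> (2 ^ DIM('a) * C * \<mu> x) powr (\<beta> / DIM('a)) * s powr \<beta>"
proof -
  have "wmeas \<mu> (centred_cube x s) powr (\<beta> / DIM('a))
      \<le> (2 ^ DIM('a) * C * \<mu> x * s ^ DIM('a)) powr (\<beta> / DIM('a))"
    using assms wmeas_mu_nonneg
    by (intro powr_mono2 wmeas_centred_cube_le) auto
  also have "\<dots> = (2 ^ DIM('a) * C * \<mu> x) powr (\<beta> / DIM('a)) * s powr \<beta>"
    using s one_le_C A1_point_pos[OF x]
    by (simp add: powr_mult powr_realpow[symmetric] powr_powr)
  finally show ?thesis .
qed

end

section \<open>Pointwise control of \<open>b\<close>\<close>

lemma eventually_at_right_powr_less:
  fixes c \<beta> \<epsilon> :: real
  assumes "0 < \<beta>" "0 < \<epsilon>"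
  shows "\<forall>\<^sub>F s in at_right 0. c * s powr \<beta> < \<epsilon>"
proof -
  have "((\<lambda>s. c * s powr \<beta>) \<longlongrightarrow> c * 0) (at_right 0)"
    using assms(1)
    by (intro tendsto_mult tendsto_const tendsto_zero_powrI[of "\<lambda>s. s"] tendsto_ident_at)
      (auto simp: eventually_at_right_field intro: exI[of _ 1])
  then show ?thesis
    using assms(2) by (auto dest: order_tendstoD(2))
qed

locale A1_Lip = A1_weight \<mu> C for \<mu> :: "'a::euclidean_space \<Rightarrow> real" and C :: real +
  fixes \<beta> :: real and b :: "'a \<Rightarrow> real"
  assumes beta_pos: "0 < \<beta>" and Lip: "in_Lip \<beta> \<mu> b"
begin

definition L :: real where
  "L = enn2real (lip_norm \<beta> \<mu> b)"

lemma lip_norm_eq: "lip_norm \<beta> \<mu> b = ennreal L"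
  using Lip unfolding in_Lip_def L_def by (simp add: ennreal_enn2real_if less_top)

lemma L_nonneg [simp]: "0 \<le> L"
  by (simp add: L_def)

lemma b_locally_integrable: "locally_integrable b"
  using Lip by (simp add: in_Lip_def)

lemma measurable_b [measurable]: "b \<in> borel_measurable lebesgue"
  using b_locally_integrable by (rule locally_integrable_measurable)

lemma oscillation_le:
  assumes Q: "Q \<in> cubes"
  shows "(LINT y:Q|lebesgue. \<bar>b y - cube_avg b Q\<bar>) \<le> L * wmeas \<mu> Q powr (1 + \<beta> / DIM('a))"
proof -
  let ?w = "wmeas \<mu> Q" and ?p = "1 + \<beta> / DIM('a)"
  let ?I = "LINT y:Q|lebesgue. \<bar>b y - cube_avg b Q\<bar>"
  have wp: "0 < ?w powr ?p"
    using wmeas_cubes_pos[OF weight Q] by simp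
  have I: "(\<integral>\<^sup>+y\<in>Q. ennreal \<bar>b y - cube_avg b Q\<bar> \<partial>lebesgue) = ennreal ?I"
    using Q b_locally_integrable
    by (intro set_integrable_nn_set_integral_eq set_integrable_abs_diff_const bounded_cubes sets_cubes) auto
  have "ennreal (1 / ?w powr ?p) * (\<integral>\<^sup>+y\<in>Q. ennreal \<bar>b y - cube_avg b Q\<bar> \<partial>lebesgue) \<le> lip_norm \<beta> \<mu> b"
    unfolding lip_norm_def using Q by (rule SUP_upper)
  then have "ennreal (1 / ?w powr ?p * ?I) \<le> ennreal L"
    unfolding I lip_norm_eq using wp by (subst ennreal_mult') auto
  then have "1 / ?w powr ?p * ?I \<le> L"
    by (simp add: ennreal_le_iff)
  then show ?thesis
    using wp by (simp add: divide_le_eq mult.commute)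
qed

lemma cube_avg_diff_le_wmeas:
  assumes R: "R \<in> cubes" and R': "R' \<in> cubes" "R' \<subseteq> R" and x: "A1_point x" "x \<in> R"
  shows "\<bar>cube_avg b R' - cube_avg b R\<bar>
    \<le> measure lebesgue R / measure lebesgue R' * L * C * \<mu> x * wmeas \<mu> R powr (\<beta> / DIM('a))"
proof -
  let ?w = "wmeas \<mu> R" and ?m = "measure lebesgue R" and ?m' = "measure lebesgue R'"
  have w: "0 < ?w"
    using weight R by (rule wmeas_cubes_pos)
  have m': "0 < ?m'"
    using R'(1) by (rule measure_cubes_pos)
  have "(LINT y:R|lebesgue. \<bar>b y - cube_avg b R\<bar>) \<le> L * ?w powr (1 + \<beta> / DIM('a))"
    using R by (rule oscillation_le)
  also have "\<dots> = L * ?w * ?w powr (\<beta> / DIM('a))"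
    using w by (simp add: powr_add)
  also have "\<dots> \<le> L * (C * \<mu> x * ?m) * ?w powr (\<beta> / DIM('a))"
    using A1_pointD[OF x(1) R x(2)] by (intro mult_right_mono mult_left_mono) auto
  finally have osc: "(LINT y:R|lebesgue. \<bar>b y - cube_avg b R\<bar>) \<le> L * (C * \<mu> x * ?m) * ?w powr (\<beta> / DIM('a))" .
  have "\<bar>cube_avg b R' - cube_avg b R\<bar> \<le> (LINT y:R|lebesgue. \<bar>b y - cube_avg b R\<bar>) / ?m'"
    using b_locally_integrable R R' by (rule cube_avg_diff_le)
  also have "\<dots> \<le> L * (C * \<mu> x * ?m) * ?w powr (\<beta> / DIM('a)) / ?m'"
    using osc m' by (intro divide_right_mono) auto
  also have "\<dots> = ?m / ?m' * L * C * \<mu> x * ?w powr (\<beta> / DIM('a))"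
    by (simp add: mult_ac)
  finally show ?thesis .
qed

definition power_decay_ratio :: real where
  "power_decay_ratio = decay_ratio powr (\<beta> / DIM('a))"

lemma power_decay_ratio_pos: "0 < power_decay_ratio"
  using decay_ratio_pos by (simp add: power_decay_ratio_def)

lemma power_decay_ratio_less_1: "power_decay_ratio < 1"
proof -
  have "decay_ratio powr (\<beta> / DIM('a)) < 1 powr (\<beta> / DIM('a))"
    using decay_ratio_pos decay_ratio_less_1 beta_pos by (intro powr_less_mono2) auto
  then show ?thesis
    by (simp add: power_decay_ratio_def)
qed

lemma wmeas_powr_decay:
  assumes "0 \<le> w"
  shows "(decay_ratio ^ k * w) powr (\<beta> / DIM('a)) = power_decay_ratio ^ k * w powr (\<beta> / DIM('a))"
  using assms decay_ratio_pos
  by (simp add: powr_mult power_decay_ratio_def powr_realpow[symmetric] powr_powr powr_power mult.commute)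

lemma half_cube_avg_step:
  assumes x: "A1_point x" "x \<in> cube a s" and s: "0 < s"
  obtains a' where "x \<in> cube a' (s/2)" "wmeas \<mu> (cube a' (s/2)) \<le> decay_ratio * wmeas \<mu> (cube a s)"
    "\<bar>cube_avg b (cube a' (s/2)) - cube_avg b (cube a s)\<bar>
      \<le> 2 ^ DIM('a) * L * C * \<mu> x * wmeas \<mu> (cube a s) powr (\<beta> / DIM('a))"
proof -
  obtain a' where a': "x \<in> cube a' (s/2)" "cube a' (s/2) \<subseteq> cube a s"
    using x(2) by (rule cube_halving)
  have "\<bar>cube_avg b (cube a' (s/2)) - cube_avg b (cube a s)\<bar>
      \<le> measure lebesgue (cube a s) / measure lebesgue (cube a' (s/2)) * L * C * \<mu> x
        * wmeas \<mu> (cube a s) powr (\<beta> / DIM('a))"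
    using s a' x by (intro cube_avg_diff_le_wmeas cube_in_cubes) auto
  also have "\<dots> = 2 ^ DIM('a) * L * C * \<mu> x * wmeas \<mu> (cube a s) powr (\<beta> / DIM('a))"
    using s by (simp add: measure_cube power_divide)
  finally show thesis
    using that a' wmeas_half_cube_le[OF s a'(2)] by blast
qed

lemma nested_cube_chain:
  assumes x: "A1_point x" and h: "0 < h" and xQ: "x \<in> cube a h"
  shows "\<exists>a'. x \<in> cube a' (h / 2 ^ k) \<and>
    wmeas \<mu> (cube a' (h / 2 ^ k)) \<le> decay_ratio ^ k * wmeas \<mu> (cube a h) \<and>
    \<bar>cube_avg b (cube a' (h / 2 ^ k)) - cube_avg b (cube a h)\<bar>
      \<le> 2 ^ DIM('a) * L * C * \<mu> x * wmeas \<mu> (cube a h) powr (\<beta> / DIM('a)) * (\<Sum>i<k. power_decay_ratio ^ i)"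
proof (induction k)
  case 0
  then show ?case
    using xQ by auto
next
  case (Suc k)
  let ?p = "\<beta> / DIM('a)" and ?w = "wmeas \<mu> (cube a h)" and ?c = "2 ^ DIM('a) * L * C * \<mu> x"
  define s where "s = h / 2 ^ k"
  have s: "0 < s" "h / 2 ^ Suc k = s / 2"
    using h by (auto simp: s_def)
  obtain a' where a': "x \<in> cube a' s" "wmeas \<mu> (cube a' s) \<le> decay_ratio ^ k * ?w"
    "\<bar>cube_avg b (cube a' s) - cube_avg b (cube a h)\<bar> \<le> ?c * ?w powr ?p * (\<Sum>i<k. power_decay_ratio ^ i)"
    using Suc.IH unfolding s_def by blast
  obtain a'' where a'': "x \<in> cube a'' (s/2)" "wmeas \<mu> (cube a'' (s/2)) \<le> decay_ratio * wmeas \<mu> (cube a' s)"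
    "\<bar>cube_avg b (cube a'' (s/2)) - cube_avg b (cube a' s)\<bar> \<le> ?c * wmeas \<mu> (cube a' s) powr ?p"
    using x a'(1) s(1) by (rule half_cube_avg_step)
  have decay: "wmeas \<mu> (cube a'' (s/2)) \<le> decay_ratio ^ Suc k * ?w"
    using a''(2) a'(2) decay_ratio_pos by (auto intro: order_trans mult_left_mono)
  have "wmeas \<mu> (cube a' s) powr ?p \<le> power_decay_ratio ^ k * ?w powr ?p"
    using a'(2) beta_pos wmeas_mu_nonneg
    by (auto simp flip: wmeas_powr_decay intro: powr_mono2)
  then have "?c * wmeas \<mu> (cube a' s) powr ?p \<le> ?c * ?w powr ?p * power_decay_ratio ^ k"
    using one_le_C mu_nonneg[of x] by (simp add: mult_left_mono mult_ac)
  with a'(3) a''(3) have "\<bar>cube_avg b (cube a'' (s/2)) - cube_avg b (cube a h)\<bar>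
      \<le> ?c * ?w powr ?p * (\<Sum>i<Suc k. power_decay_ratio ^ i)"
    by (simp add: algebra_simps)
  then show ?case
    unfolding s(2) using a''(1) decay by blast
qed

definition osc_const :: real where
  "osc_const = 2 ^ DIM('a) * C / (1 - power_decay_ratio)"

lemma osc_const_pos: "0 < osc_const"
  using one_le_C power_decay_ratio_less_1 by (simp add: osc_const_def)

lemma frequently_small_cube_avg_le:
  assumes x: "A1_point x" and Q: "Q \<in> cubes" "x \<in> Q"
  shows "\<exists>\<^sub>F s in at_right 0. \<exists>a. x \<in> cube a s \<and>
    \<bar>cube_avg b (cube a s) - cube_avg b Q\<bar> \<le> osc_const * L * \<mu> x * wmeas \<mu> Q powr (\<beta> / DIM('a))"
proof -
  obtain a h where h: "0 < h" and Qe: "Q = cube a h"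
    using Q(1) by (rule cubesE)
  let ?c = "2 ^ DIM('a) * L * C * \<mu> x * wmeas \<mu> Q powr (\<beta> / DIM('a))"
  have "?c * (\<Sum>i<k. power_decay_ratio ^ i) \<le> osc_const * L * \<mu> x * wmeas \<mu> Q powr (\<beta> / DIM('a))" for k
  proof -
    have "(\<Sum>i<k. power_decay_ratio ^ i) \<le> 1 / (1 - power_decay_ratio)"
      using power_decay_ratio_pos power_decay_ratio_less_1 by (simp add: sum_gp_strict divide_right_mono)
    then have "?c * (\<Sum>i<k. power_decay_ratio ^ i) \<le> ?c * (1 / (1 - power_decay_ratio))"
      using one_le_C mu_nonneg[of x] by (intro mult_left_mono) auto
    then show ?thesis
      by (simp add: osc_const_def mult_ac)
  qed
  moreover have "\<exists>k. h / 2 ^ k < \<rho>" if "0 < \<rho>" for \<rho>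
  proof -
    obtain k where "h / \<rho> < 2 ^ k"
      using real_arch_pow[of 2 "h / \<rho>"] by auto
    then show ?thesis
      using that by (auto simp: divide_less_eq mult.commute)
  qed
  ultimately have "\<exists>s. 0 < s \<and> s < \<rho> \<and> (\<exists>a. x \<in> cube a s \<and>
      \<bar>cube_avg b (cube a s) - cube_avg b Q\<bar> \<le> osc_const * L * \<mu> x * wmeas \<mu> Q powr (\<beta> / DIM('a)))"
    if "0 < \<rho>" for \<rho>
    using nested_cube_chain[OF x h Q(2)[unfolded Qe]] that h unfolding Qe
    by (meson divide_pos_pos order_trans zero_less_numeral zero_less_power)
  then show ?thesis
    by (auto simp: frequently_def eventually_at_right_field)
qed

lemma frequently_centred_cube_avg_le:
  assumes x: "A1_point x" and Q: "Q \<in> cubes" "x \<in> Q" and \<epsilon>: "0 < \<epsilon>"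
  shows "\<exists>\<^sub>F s in at_right 0. \<bar>cube_avg b (centred_cube x s) - cube_avg b Q\<bar>
    \<le> osc_const * L * \<mu> x * wmeas \<mu> Q powr (\<beta> / DIM('a)) + \<epsilon>"
proof -
  let ?p = "\<beta> / DIM('a)"
  define c where "c = 2 ^ DIM('a) * L * C * \<mu> x"
  define A where "A = (2 ^ DIM('a) * C * \<mu> x) powr ?p"
  have c: "0 \<le> c"
    using one_le_C mu_nonneg[of x] by (simp add: c_def)
  have "\<forall>\<^sub>F s in at_right 0. 0 < s \<and> c * A * s powr \<beta> < \<epsilon>"
    using beta_pos \<epsilon> by (intro eventually_conj eventually_at_right_powr_less) (auto simp: eventually_at_right_less)
  with frequently_small_cube_avg_le[OF x Q]
  have "\<exists>\<^sub>F s in at_right 0. (0 < s \<and> c * A * s powr \<beta> < \<epsilon>) \<and> (\<exists>a. x \<in> cube a s \<and>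
      \<bar>cube_avg b (cube a s) - cube_avg b Q\<bar> \<le> osc_const * L * \<mu> x * wmeas \<mu> Q powr ?p)"
    by (rule frequently_eventually_conj)
  then show ?thesis
  proof (rule frequently_elim1, elim conjE exE)
    fix s a
    assume s: "0 < s" "c * A * s powr \<beta> < \<epsilon>" and xR: "x \<in> cube a s"
      and avg: "\<bar>cube_avg b (cube a s) - cube_avg b Q\<bar> \<le> osc_const * L * \<mu> x * wmeas \<mu> Q powr ?p"
    have "\<bar>cube_avg b (cube a s) - cube_avg b (centred_cube x s)\<bar>
        \<le> measure lebesgue (centred_cube x s) / measure lebesgue (cube a s) * L * C * \<mu> x
          * wmeas \<mu> (centred_cube x s) powr ?p"
      using s xR x
      by (intro cube_avg_diff_le_wmeas centred_cube_in_cubes cube_in_cubes cube_subset_centred_cube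
          centre_in_centred_cube)
    also have "\<dots> = c * wmeas \<mu> (centred_cube x s) powr ?p"
      using s(1) by (simp add: c_def measure_centred_cube measure_cube)
    also have "\<dots> \<le> c * (A * s powr \<beta>)"
      unfolding A_def using x s(1) beta_pos c
      by (intro mult_left_mono wmeas_centred_cube_powr_le) auto
    finally show "\<bar>cube_avg b (centred_cube x s) - cube_avg b Q\<bar>
        \<le> osc_const * L * \<mu> x * wmeas \<mu> Q powr ?p + \<epsilon>"
      using avg s(2) by (simp add: mult.assoc)
  qed
qed

lemma eventually_level_set_measure_less:
  assumes x: "A1_point x" and t: "0 < t" and e: "0 < e"
  shows "\<forall>\<^sub>F s in at_right 0. measure lebesgue {y \<in> centred_cube x s. t \<le> \<bar>b y - cube_avg b (centred_cube x s)\<bar>}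
    < e * measure lebesgue (ball x s)"
proof -
  let ?p = "\<beta> / DIM('a)"
  define B where "B = 2 ^ DIM('a) * C * \<mu> x"
  define V where "V = measure lebesgue (ball (0::'a) 1)"
  have B: "0 \<le> B"
    using one_le_C mu_nonneg[of x] by (simp add: B_def)
  have V: "0 < V"
    using content_ball_pos[of 1 "0::'a"] by (simp add: V_def)
  have "\<forall>\<^sub>F s in at_right 0. 0 < s \<and> L / t * B * B powr ?p * s powr \<beta> < e * V"
    using beta_pos e V by (intro eventually_conj eventually_at_right_powr_less) (auto simp: eventually_at_right_less)
  then show ?thesis
  proof eventually_elim
    case (elim s)
    let ?R = "centred_cube x s"
    have R: "?R \<in> cubes"
      using elim by (intro centred_cube_in_cubes) auto
    have "measure lebesgue {y \<in> ?R. t \<le> \<bar>b y - cube_avg b ?R\<bar>} \<le> (LINT y:?R|lebesgue. \<bar>b y - cube_avg b ?R\<bar>) / t"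
      using t R b_locally_integrable
      by (intro integral_Markov_inequality'_measure set_integrable_abs_diff_const bounded_cubes sets_cubes) auto
    also have "\<dots> \<le> L * wmeas \<mu> ?R powr (1 + ?p) / t"
      using oscillation_le[OF R] t by (simp add: divide_right_mono)
    also have "\<dots> = L / t * wmeas \<mu> ?R * wmeas \<mu> ?R powr ?p"
      using wmeas_cubes_pos[OF weight R] by (simp add: powr_add)
    also have "\<dots> \<le> L / t * (B * s ^ DIM('a)) * (B powr ?p * s powr \<beta>)"
      using x elim t beta_pos wmeas_mu_nonneg one_le_C mu_nonneg[of x] unfolding B_def
      by (intro mult_mono mult_left_mono wmeas_centred_cube_le wmeas_centred_cube_powr_le) auto
    also have "\<dots> = (L / t * B * B powr ?p * s powr \<beta>) * s ^ DIM('a)"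
      by (simp add: mult_ac)
    also have "\<dots> < e * V * s ^ DIM('a)"
      using elim by (intro mult_strict_right_mono) auto
    also have "\<dots> = e * measure lebesgue (ball x s)"
      using elim content_ball_conv_unit_ball[of s x] by (simp add: V_def)
    finally show ?case .
  qed
qed

text \<open>On this set \<open>b\<close> varies by less than \<open>1/(j+1)\<close>, while near each of its points the averages
  of \<open>b\<close> over small centred cubes stay \<open>2/(j+1)\<close> away from \<open>b\<close>; so it has density zero everywhere.\<close>

definition exceptional_set :: "nat \<Rightarrow> int \<Rightarrow> 'a set" where
  "exceptional_set j k = {x. A1_point x \<and>
     (\<exists>Q\<in>cubes. x \<in> Q \<and>
        osc_const * L * \<mu> x * wmeas \<mu> Q powr (\<beta> / DIM('a)) + 3 / Suc j < \<bar>b x - cube_avg b Q\<bar>) \<and>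
     of_int k \<le> Suc j * b x \<and> Suc j * b x < of_int k + 1}"

lemma exceptional_set_close:
  assumes "x \<in> exceptional_set j k" "y \<in> exceptional_set j k"
  shows "\<bar>b y - b x\<bar> < 1 / Suc j"
proof -
  have "\<bar>Suc j * b y - Suc j * b x\<bar> < 1"
    using assms unfolding exceptional_set_def by auto
  then have "Suc j * \<bar>b y - b x\<bar> < 1"
    by (simp add: right_diff_distrib[symmetric] abs_mult)
  then show ?thesis
    by (simp add: less_divide_eq mult.commute)
qed

lemma negligible_exceptional_set: "negligible (exceptional_set j k)"
  unfolding negligible_eq_zero_density
proof (intro ballI allI impI)
  fix x and r e :: real
  assume xE: "x \<in> exceptional_set j k" and r: "0 < r" and e: "0 < e"
  define t :: real where "t = 1 / Suc j"
  have t: "0 < t"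
    by (simp add: t_def)
  obtain Q where x: "A1_point x" and Q: "Q \<in> cubes" "x \<in> Q"
    and gap: "osc_const * L * \<mu> x * wmeas \<mu> Q powr (\<beta> / DIM('a)) + 3 * t < \<bar>b x - cube_avg b Q\<bar>"
    using xE by (auto simp: exceptional_set_def t_def)
  let ?U = "\<lambda>s. {y \<in> centred_cube x s. t \<le> \<bar>b y - cube_avg b (centred_cube x s)\<bar>}"
  have "\<forall>\<^sub>F s in at_right 0. (0 < s \<and> s < r) \<and> measure lebesgue (?U s) < e * measure lebesgue (ball x s)"
    using r x t e
    by (intro eventually_conj eventually_level_set_measure_less)
      (auto simp: eventually_at_right_less eventually_at_right_field intro: exI[of _ r])
  from frequently_ex[OF frequently_eventually_conj[OF frequently_centred_cube_avg_le[OF x Q t] this]]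
  obtain s where s: "0 < s" "s < r" "measure lebesgue (?U s) < e * measure lebesgue (ball x s)"
    and avg: "\<bar>cube_avg b (centred_cube x s) - cube_avg b Q\<bar>
      \<le> osc_const * L * \<mu> x * wmeas \<mu> Q powr (\<beta> / DIM('a)) + t"
    by blast
  have "exceptional_set j k \<inter> ball x s \<subseteq> ?U s"
  proof
    fix y assume y: "y \<in> exceptional_set j k \<inter> ball x s"
    let ?c = "cube_avg b (centred_cube x s)"
    have "\<bar>b y - b x\<bar> < t"
      using exceptional_set_close[OF xE] y by (auto simp: t_def)
    moreover have "\<bar>b x - cube_avg b Q\<bar> \<le> \<bar>b x - ?c\<bar> + \<bar>?c - cube_avg b Q\<bar>"
      using abs_triangle_ineq[of "b x - ?c" "?c - cube_avg b Q"] by simp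
    moreover have "\<bar>b x - ?c\<bar> \<le> \<bar>b x - b y\<bar> + \<bar>b y - ?c\<bar>"
      using abs_triangle_ineq[of "b x - b y" "b y - ?c"] by simp
    ultimately have "t \<le> \<bar>b y - ?c\<bar>"
      using gap avg by (simp add: abs_minus_commute)
    then show "y \<in> ?U s"
      using y ball_subset_centred_cube[of x s] by auto
  qed
  moreover have "?U s \<in> lmeasurable"
    by (rule fmeasurableI2[of "centred_cube x s"]) (auto simp: centred_cube_def)
  ultimately show "\<exists>d>0. d \<le> r \<and> (\<exists>U. exceptional_set j k \<inter> ball x d \<subseteq> U \<and> U \<in> lmeasurable \<and>
      measure lebesgue U < e * measure lebesgue (ball x d))"
    using s by (intro exI[of _ s] conjI exI[of _ "?U s"]) auto
qed

definition regular_point :: "'a \<Rightarrow> bool" where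
  "regular_point x \<longleftrightarrow> A1_point x \<and> (\<forall>Q\<in>cubes. x \<in> Q \<longrightarrow>
     \<bar>b x - cube_avg b Q\<bar> \<le> osc_const * L * \<mu> x * wmeas \<mu> Q powr (\<beta> / DIM('a)))"

lemma AE_regular_point: "AE x in lebesgue. regular_point x"
proof -
  have "negligible (\<Union>(j, k). exceptional_set j k)"
    by (intro negligible_countable_Union) (auto simp: negligible_exceptional_set)
  then have "AE x in lebesgue. x \<notin> (\<Union>(j, k). exceptional_set j k)"
    by (intro AE_not_in) (simp add: negligible_iff_null_sets)
  with AE_A1_point show ?thesis
  proof eventually_elim
    case (elim x)
    have "\<bar>b x - cube_avg b Q\<bar> \<le> osc_const * L * \<mu> x * wmeas \<mu> Q powr (\<beta> / DIM('a))"
      if Q: "Q \<in> cubes" "x \<in> Q" for Q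
    proof (rule ccontr)
      let ?g = "\<bar>b x - cube_avg b Q\<bar> - osc_const * L * \<mu> x * wmeas \<mu> Q powr (\<beta> / DIM('a))"
      assume "\<not> ?thesis"
      then have g: "0 < ?g"
        by simp
      obtain j :: nat where "3 / ?g < j"
        using reals_Archimedean2 by blast
      then have "3 / Suc j < ?g"
        using g by (simp add: field_simps)
      then have "x \<in> exceptional_set j \<lfloor>Suc j * b x\<rfloor>"
        using elim Q unfolding exceptional_set_def by auto
      with elim show False
        by auto
    qed
    with elim show ?case
      by (simp add: regular_point_def)
  qed
qed

lemma regular_points_diff_le:
  assumes x: "regular_point x" and y: "regular_point y" and Q: "Q \<in> cubes" "x \<in> Q" "y \<in> Q"
  shows "\<bar>b x - b y\<bar> \<le> 2 * osc_const * C * L * \<mu> x * (measure lebesgue Q / wmeas \<mu> Q)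
    * wmeas \<mu> Q powr (\<beta> / DIM('a)) * \<mu> y"
proof -
  let ?w = "wmeas \<mu> Q" and ?m = "measure lebesgue Q" and ?P = "wmeas \<mu> Q powr (\<beta> / DIM('a))"
  define X where "X = C * \<mu> x * \<mu> y * ?m / ?w"
  have w: "0 < ?w"
    using weight Q(1) by (rule wmeas_cubes_pos)
  have A1: "A1_point x" "A1_point y"
    using x y by (simp_all add: regular_point_def)
  have "\<mu> x * 1 \<le> \<mu> x * (C * \<mu> y * ?m / ?w)"
    using A1_pointD[OF A1(2) Q(1,3)] A1_point_pos[OF A1(1)] w by (intro mult_left_mono) auto
  moreover have "\<mu> y * 1 \<le> \<mu> y * (C * \<mu> x * ?m / ?w)"
    using A1_pointD[OF A1(1) Q(1,2)] A1_point_pos[OF A1(2)] w by (intro mult_left_mono) auto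
  moreover have "\<mu> x * (C * \<mu> y * ?m / ?w) = X" "\<mu> y * (C * \<mu> x * ?m / ?w) = X"
    by (simp_all add: X_def mult_ac)
  ultimately have "\<mu> x + \<mu> y \<le> 2 * X"
    by linarith
  have "\<bar>b x - b y\<bar> \<le> \<bar>b x - cube_avg b Q\<bar> + \<bar>b y - cube_avg b Q\<bar>"
    by linarith
  also have "\<dots> \<le> osc_const * L * \<mu> x * ?P + osc_const * L * \<mu> y * ?P"
    using x y Q unfolding regular_point_def by (intro add_mono) auto
  also have "\<dots> = osc_const * L * ?P * (\<mu> x + \<mu> y)"
    by (simp add: algebra_simps)
  also have "\<dots> \<le> osc_const * L * ?P * (2 * X)"
    using \<open>\<mu> x + \<mu> y \<le> 2 * X\<close> osc_const_pos by (intro mult_left_mono) auto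
  also have "\<dots> = 2 * osc_const * C * L * \<mu> x * (?m / ?w) * ?P * \<mu> y"
    by (simp add: X_def mult_ac)
  finally show ?thesis .
qed

lemma commutator_integral_le:
  assumes x: "regular_point x" and Q: "Q \<in> cubes" "x \<in> Q" and f[measurable]: "f \<in> borel_measurable lebesgue"
  shows "(\<integral>\<^sup>+y\<in>Q. ennreal (\<bar>b x - b y\<bar> * \<bar>f y\<bar>) \<partial>lebesgue)
    \<le> ennreal (2 * osc_const * C * L * \<mu> x * (measure lebesgue Q / wmeas \<mu> Q) * wmeas \<mu> Q powr (\<beta> / DIM('a)))
      * (\<integral>\<^sup>+y\<in>Q. ennreal (\<bar>f y\<bar> * \<mu> y) \<partial>lebesgue)"
    (is "_ \<le> ennreal ?D * _")
proof -
  have D: "0 \<le> ?D"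
    using osc_const_pos one_le_C mu_nonneg[of x] wmeas_mu_nonneg measure_nonneg[of lebesgue Q] by simp
  have "AE y in lebesgue. ennreal (\<bar>b x - b y\<bar> * \<bar>f y\<bar>) * indicator Q y
      \<le> ennreal ?D * ennreal (\<bar>f y\<bar> * \<mu> y) * indicator Q y"
    using AE_regular_point
  proof eventually_elim
    case (elim y)
    have "ennreal (\<bar>b x - b y\<bar> * \<bar>f y\<bar>) \<le> ennreal ?D * ennreal (\<bar>f y\<bar> * \<mu> y)" if "y \<in> Q"
    proof -
      have "\<bar>b x - b y\<bar> * \<bar>f y\<bar> \<le> (?D * \<mu> y) * \<bar>f y\<bar>"
        using regular_points_diff_le[OF x elim Q that] by (intro mult_right_mono) auto
      then have "ennreal (\<bar>b x - b y\<bar> * \<bar>f y\<bar>) \<le> ennreal (?D * (\<bar>f y\<bar> * \<mu> y))"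
        by (intro ennreal_leI) (simp add: mult_ac)
      also have "\<dots> = ennreal ?D * ennreal (\<bar>f y\<bar> * \<mu> y)"
        using D mu_nonneg[of y] by (intro ennreal_mult) auto
      finally show ?thesis .
    qed
    then show ?case
      by (auto simp: indicator_def)
  qed
  then have "(\<integral>\<^sup>+y\<in>Q. ennreal (\<bar>b x - b y\<bar> * \<bar>f y\<bar>) \<partial>lebesgue)
      \<le> (\<integral>\<^sup>+y\<in>Q. ennreal ?D * ennreal (\<bar>f y\<bar> * \<mu> y) \<partial>lebesgue)"
    by (rule nn_integral_mono_AE)
  also have "\<dots> = ennreal ?D * (\<integral>\<^sup>+y\<in>Q. ennreal (\<bar>f y\<bar> * \<mu> y) \<partial>lebesgue)"
    using sets_cubes[OF Q(1)] by (subst nn_integral_cmult[symmetric]) (auto simp: mult_ac)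
  finally show ?thesis .
qed

lemma Mb_cube_le:
  assumes x: "regular_point x" and Q: "Q \<in> cubes" "x \<in> Q" and f: "f \<in> borel_measurable lebesgue" and r: "1 < r"
  shows "ennreal (1 / measure lebesgue Q) * (\<integral>\<^sup>+y\<in>Q. ennreal (\<bar>b x - b y\<bar> * \<bar>f y\<bar>) \<partial>lebesgue)
    \<le> ennreal (2 * osc_const * C) * lip_norm \<beta> \<mu> b * ennreal (\<mu> x) * Mfrac \<beta> \<mu> r f x"
proof -
  let ?w = "wmeas \<mu> Q" and ?m = "measure lebesgue Q" and ?p = "\<beta> / DIM('a)"
  let ?J = "\<integral>\<^sup>+y\<in>Q. ennreal (\<bar>f y\<bar> * \<mu> y) \<partial>lebesgue"
  define D where "D = 2 * osc_const * C * L * \<mu> x"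
  have D: "0 \<le> D"
    using osc_const_pos one_le_C mu_nonneg[of x] by (simp add: D_def)
  have m: "0 < ?m"
    using Q(1) by (rule measure_cubes_pos)
  have "ennreal (1 / ?m) * (\<integral>\<^sup>+y\<in>Q. ennreal (\<bar>b x - b y\<bar> * \<bar>f y\<bar>) \<partial>lebesgue)
      \<le> ennreal (1 / ?m) * (ennreal (D * (?m / ?w) * ?w powr ?p) * ?J)"
    using commutator_integral_le[OF x Q f] by (intro mult_left_mono) (auto simp: D_def)
  also have "\<dots> = ennreal D * (ennreal (?w powr ?p / ?w) * ?J)"
    using D m wmeas_mu_nonneg[of Q]
    by (simp add: ennreal_mult[symmetric] mult.assoc[symmetric])
  also have "\<dots> \<le> ennreal D * Mfrac \<beta> \<mu> r f x"
    by (intro mult_left_mono order_trans[OF weighted_avg_le_frac_cube_avg[OF weight Q(1) f r]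
        frac_cube_avg_le_Mfrac[OF Q]]) auto
  also have "\<dots> = ennreal (2 * osc_const * C) * lip_norm \<beta> \<mu> b * ennreal (\<mu> x) * Mfrac \<beta> \<mu> r f x"
    using osc_const_pos one_le_C mu_nonneg[of x]
    by (simp add: D_def lip_norm_eq ennreal_mult mult_ac)
  finally show ?thesis .
qed

lemma Mb_le:
  assumes "regular_point x" "f \<in> borel_measurable lebesgue" "1 < r"
  shows "Mb b f x \<le> ennreal (2 * osc_const * C) * lip_norm \<beta> \<mu> b * ennreal (\<mu> x) * Mfrac \<beta> \<mu> r f x"
  unfolding Mb_def using assms by (intro SUP_least) (auto intro: Mb_cube_le)

end

theorem lemma2p7:
  fixes \<mu> b :: "'a::euclidean_space \<Rightarrow> real" and \<beta> r :: real
  assumes "weight \<mu>" and "A1 \<mu>"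
    and "0 < \<beta>" and "\<beta> < 1"
    and "in_Lip \<beta> \<mu> b"
    and "1 < r"
  shows "\<exists>C>0. \<forall>f. locally_integrable f \<longrightarrow>
           (AE x in lebesgue. Mb b f x \<le> ennreal C * lip_norm \<beta> \<mu> b * ennreal (\<mu> x) * Mfrac \<beta> \<mu> r f x)"
proof -
  obtain C where "1 \<le> C" and "AE x in lebesgue. 0 < \<mu> x \<and>
      (\<forall>Q\<in>cubes. x \<in> Q \<longrightarrow> wmeas \<mu> Q \<le> C * \<mu> x * measure lebesgue Q)"
    using A1_imp_AE_uniform_bound[OF assms(1,2)] by blast
  then interpret A1_Lip \<mu> C \<beta> b
    using assms by unfold_locales auto
  show ?thesis
  proof (intro exI[of _ "2 * osc_const * C"] conjI allI impI)
    show "0 < 2 * osc_const * C"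
      using osc_const_pos one_le_C by simp
    fix f :: "'a \<Rightarrow> real"
    assume "locally_integrable f"
    then have "f \<in> borel_measurable lebesgue"
      by (rule locally_integrable_measurable)
    with AE_regular_point \<open>1 < r\<close> show "AE x in lebesgue.
        Mb b f x \<le> ennreal (2 * osc_const * C) * lip_norm \<beta> \<mu> b * ennreal (\<mu> x) * Mfrac \<beta> \<mu> r f x"
      by (auto elim: AE_mp intro: Mb_le)
  qed
qed

end
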